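(* Let $S$ be an atom-simple Stone relation algebra with finitely many atoms, and let $C : S\to\mathbb{N}$ map each $x$ to the number of atoms below $x$. Assume that for all $x\in S$, $C(x)=0\iff x=\bot$, and that $C(\top)=C(1)^2$. Then $S$ is atomic and atom-rectangular, and hence $S$ is a representable relation algebra.
   Context: A Stone relation algebra is a structure $(S,\sqcup,\sqcap,\cdot,\overline{\,\cdot\,},{}^{\smile},\bot,\top,1)$ (write $xy$ for $x\cdot y$, $\overline{x}$ for the pseudocomplement, $x^{\smile}$ for the converse) such that: $(S,\sqcup,\sqcap,\bot,\top)$ is a bounded distributive lattice with order $x\sqsubseteq y\iff x\sqcup y=y$; $x\sqcap y=\bot\iff x\sqsubseteq\overline{y}$; $\overline{x}\sqcup\overline{\overline{x}}=\top$; $\cdot$ is associative with two-sided unit $1$, distributes over $\sqcup$ on both sides, and $\bot$ is a zero of $\cdot$; $x^{\smile\smile}=x$, $(xy)^{\smile}=y^{\smile}x^{\smile}$, $(x\sqcup y)^{\smile}=x^{\smile}\sqcup y^{\smile}$; $\overline{\overline{1}}=1$; $\overline{\overline{xy}}=\overline{\overline{x}}\,\overline{\overline{y}}$; $xy\sqcap z\sqsubseteq x(y\sqcap x^{\smile}z)$. A relation algebra is a Stone relation algebra with $\overline{\overline{x}}=x$ for all $x$; it is representable if it is isomorphic to an algebra of binary relations (on some base set) with the usual relational operations (union, intersection, complement, relational composition, converse, empty relation, greatest relation, identity). An atom is an element $x\neq\bot$ such that $\bot\neq y\sqsubseteq x$ implies $y=x$. An element $x$ is a rectangle if $x\top x\sqsubseteq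 x$ and simple if $\top x\top=\top$. $S$ is atomic if every $x\neq\bot$ has an atom below it; atom-rectangular if every atom is a rectangle; atom-simple if every atom is simple. *)

theory Defs
  imports Main
begin

text \<open>Stone relation algebras. The lattice is given by Main's inf/sup/bot/top
(order: x \<le> y iff sup x y = y), the pseudocomplement by uminus, composition by
times with unit 1, and the converse by conv.\<close>

class stone_relation_algebra = distrib_lattice + bounded_lattice + monoid_mult + uminus +
  fixes conv :: "'a \<Rightarrow> 'a"
  assumes pseudo_complement: "inf x y = bot \<longleftrightarrow> x \<le> - y"
  and stone: "sup (- x) (- (- x)) = top"
  and comp_sup_distr_left: "x * sup y z = sup (x * y) (x * z)"
  and comp_sup_distr_right: "sup x y * z = sup (x * z) (y * z)"
  and comp_bot_left: "bot * x = bot"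
  and comp_bot_right: "x * bot = bot"
  and conv_involutive: "conv (conv x) = x"
  and conv_comp: "conv (x * y) = conv y * conv x"
  and conv_sup: "conv (sup x y) = sup (conv x) (conv y)"
  and pp_one: "- (- (1::'a)) = 1"
  and pp_comp: "- (- (x * y)) = (- (- x)) * (- (- y))"
  and dedekind1: "inf (x * y) z \<le> x * inf y (conv x * z)"
begin

definition atom :: "'a \<Rightarrow> bool" where
  "atom x \<longleftrightarrow> x \<noteq> bot \<and> (\<forall>y. y \<noteq> bot \<and> y \<le> x \<longrightarrow> y = x)"

definition rectangle :: "'a \<Rightarrow> bool" where
  "rectangle x \<longleftrightarrow> x * top * x \<le> x"

definition simple :: "'a \<Rightarrow> bool" where
  "simple x \<longleftrightarrow> top * x * top = top"

end

definition atomic :: "'a::stone_relation_algebra itself \<Rightarrow> bool" where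
  "atomic (_::'a::stone_relation_algebra itself) \<longleftrightarrow> (\<forall>x::'a::stone_relation_algebra. x \<noteq> bot \<longrightarrow> (\<exists>a. atom a \<and> a \<le> x))"

definition atom_rectangular :: "'a::stone_relation_algebra itself \<Rightarrow> bool" where
  "atom_rectangular (_::'a::stone_relation_algebra itself) \<longleftrightarrow> (\<forall>a::'a::stone_relation_algebra. atom a \<longrightarrow> rectangle a)"

definition atom_simple :: "'a::stone_relation_algebra itself \<Rightarrow> bool" where
  "atom_simple (_::'a::stone_relation_algebra itself) \<longleftrightarrow> (\<forall>a::'a::stone_relation_algebra. atom a \<longrightarrow> simple a)"

definition count_atoms :: "'a::stone_relation_algebra \<Rightarrow> nat" where
  "count_atoms x = card {a. atom a \<and> a \<le> x}"

text \<open>Relation algebra: the pseudocomplement is a Boolean complement.\<close>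
definition relation_algebra :: "'a::stone_relation_algebra itself \<Rightarrow> bool" where
  "relation_algebra (_::'a::stone_relation_algebra itself) \<longleftrightarrow> (\<forall>x::'a::stone_relation_algebra. - (- x) = x)"

text \<open>Representability: an injective homomorphism into the full algebra of binary
relations on some base set A (here taken as a set of natural numbers); its image is
an algebra of binary relations isomorphic to the whole structure.\<close>
definition representable :: "'a::stone_relation_algebra itself \<Rightarrow> bool" where
  "representable (_::'a::stone_relation_algebra itself) \<longleftrightarrow> relation_algebra TYPE('a) \<and>
     (\<exists>(A::nat set) (f :: 'a::stone_relation_algebra \<Rightarrow> (nat \<times> nat) set).
        inj f \<and>
        (\<forall>x y. f (sup x y) = f x \<union> f y) \<and>
        (\<forall>x y. f (inf x y) = f x \<inter> f y) \<and>
        (\<forall>x. f (- x) = (A \<times> A) - f x) \<and>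
        (\<forall>x y. f (x * y) = f x O f y) \<and>
        (\<forall>x. f (conv x) = (f x)\<inverse>) \<and>
        f bot = {} \<and> f top = A \<times> A \<and> f 1 = Id_on A)"


end

(* Atom-simplicity makes p * top * q nonzero for all atoms p, q below 1, and the rectangles
   of distinct pairs (p, q) are disjoint.  As there are C(1)^2 = C(top) such pairs, each
   rectangle p * top * q contains exactly one atom and every atom lies in one of them.  For
   p = q this unique atom is p itself, which forces p * top * p = p and - (- p) = p; hence
   every atom is a regular rectangle p * top * q.  With finitely many atoms every element is
   the join of the atoms below it, so the algebra is Boolean, and x is represented by the
   relation of all pairs (p, q) with p * top * q below x. *)

theory Submission
  imports Defs
begin

lemma mem_map_prod_image:
  "(u, v) \<in> map_prod h h ` r \<longleftrightarrow> (\<exists>a b. (a, b) \<in> r \<and> u = h a \<and> v = h b)"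
  by force

lemma map_prod_image_relcomp:
  assumes "inj_on h A" and "r \<subseteq> A \<times> A" and "s \<subseteq> A \<times> A"
  shows "map_prod h h ` (r O s) = map_prod h h ` r O map_prod h h ` s"
proof (rule subset_antisym; rule subrelI)
  fix u v
  assume "(u, v) \<in> map_prod h h ` (r O s)"
  then obtain a b c where "(a, b) \<in> r" "(b, c) \<in> s" "u = h a" "v = h c"
    unfolding mem_map_prod_image relcomp.simps by blast
  then show "(u, v) \<in> map_prod h h ` r O map_prod h h ` s"
    unfolding relcomp.simps mem_map_prod_image by blast
next
  fix u v
  assume "(u, v) \<in> map_prod h h ` r O map_prod h h ` s"
  then obtain a b b' c where ab: "(a, b) \<in> r" and bc: "(b', c) \<in> s" and "h b = h b'"
    and "u = h a" and "v = h c"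
    unfolding relcomp.simps mem_map_prod_image by blast
  moreover have "b = b'"
    using assms(2,3) ab bc inj_onD[OF assms(1) \<open>h b = h b'\<close>] by blast
  ultimately show "(u, v) \<in> map_prod h h ` (r O s)"
    unfolding mem_map_prod_image relcomp.simps by blast
qed

context stone_relation_algebra
begin

lemma comp_right_isotone: "y \<le> z \<Longrightarrow> x * y \<le> x * z"
  by (metis comp_sup_distr_left le_iff_sup)

lemma comp_left_isotone: "y \<le> z \<Longrightarrow> y * x \<le> z * x"
  by (metis comp_sup_distr_right le_iff_sup)

lemma comp_isotone: "x \<le> y \<Longrightarrow> u \<le> v \<Longrightarrow> x * u \<le> y * v"
  by (meson comp_left_isotone comp_right_isotone order_trans)

lemma conv_isotone: "x \<le> y \<Longrightarrow> conv x \<le> conv y"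
  by (metis conv_sup le_iff_sup)

lemma conv_le_iff: "conv x \<le> y \<longleftrightarrow> x \<le> conv y"
  by (metis conv_involutive conv_isotone)

lemma conv_top: "conv top = top"
  by (metis conv_le_iff top.extremum top.extremum_unique)

lemma conv_inf: "conv (inf x y) = inf (conv x) (conv y)"
proof (rule order.antisym)
  show "conv (inf x y) \<le> inf (conv x) (conv y)"
    by (simp add: conv_isotone)
  show "inf (conv x) (conv y) \<le> conv (inf x y)"
    by (metis conv_le_iff inf.cobounded1 inf.cobounded2 le_inf_iff)
qed

lemma pp_increasing: "x \<le> - (- x)"
  using pseudo_complement by (metis inf.commute order_refl)

lemma inf_p: "inf x (- x) = bot"
  using pseudo_complement pp_increasing by blast

lemma p_antitone: "x \<le> y \<Longrightarrow> - y \<le> - x"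
  by (metis inf.absorb_iff2 inf_left_commute inf_p pseudo_complement inf.commute)

lemma ppp: "- (- (- x)) = - x"
  by (simp add: order.antisym p_antitone pp_increasing)

lemma p_bot: "- bot = top"
  by (metis inf_bot_right pseudo_complement top.extremum_unique order_refl)

lemma p_top: "- top = bot"
  by (metis inf_p inf_top_left)

lemma p_dist_sup: "- sup x y = inf (- x) (- y)"
proof (rule order.antisym)
  show "- sup x y \<le> inf (- x) (- y)"
    by (simp add: p_antitone)
  have "inf (inf (- x) (- y)) (sup x y) = bot"
    by (metis inf_sup_distrib1 inf_p inf.assoc inf.commute inf_bot_right sup_bot_left)
  then show "inf (- x) (- y) \<le> - sup x y"
    using pseudo_complement by blast
qed

lemma regular_sup:
  assumes "- (- x) = x" and "- (- y) = y"
  shows "- (- (sup x y)) = sup x y"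
proof -
  define w where "w = - inf (- x) (- y)"
  have disjoint: "inf (inf w (- x)) (- y) = bot"
    unfolding w_def by (metis inf.assoc inf.commute inf_p)
  have "w = inf w (sup x (- x))"
    using stone[of x] assms(1) by (simp add: sup.commute)
  also have "\<dots> = sup (inf w x) (inf (inf w (- x)) (sup y (- y)))"
    using stone[of y] assms(2) by (simp add: inf_sup_distrib1 sup.commute)
  also have "\<dots> = sup (inf w x) (inf (inf w (- x)) y)"
    using disjoint by (simp add: inf_sup_distrib1)
  finally have "w \<le> sup x y"
    using sup_mono[OF inf.cobounded2 inf.cobounded2] by metis
  then show ?thesis
    unfolding w_def by (metis order.antisym p_dist_sup pp_increasing)
qed

lemma dedekind_2: "inf (x * y) z \<le> inf x (z * conv y) * y"
proof -
  have "conv (inf (x * y) z) = inf (conv y * conv x) (conv z)"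
    by (simp add: conv_inf conv_comp)
  also have "\<dots> \<le> conv y * inf (conv x) (conv (conv y) * conv z)"
    by (rule dedekind1)
  also have "\<dots> = conv (inf x (z * conv y) * y)"
    by (simp add: conv_inf conv_comp conv_involutive)
  finally show ?thesis
    by (metis conv_involutive conv_isotone)
qed

lemma coreflexive_symmetric: "p \<le> 1 \<Longrightarrow> conv p = p"
proof -
  assume p: "p \<le> 1"
  have "p \<le> p * inf 1 (conv p * 1)"
    using dedekind1[of p 1 1] p by (simp add: inf.absorb1)
  also have "\<dots> \<le> conv p"
    using p by (metis comp_left_isotone inf.cobounded2 mult_1_left mult_1_right order_trans)
  finally show ?thesis
    by (metis conv_le_iff order.antisym)
qed

lemma coreflexive_comp_inf: "p \<le> 1 \<Longrightarrow> q \<le> 1 \<Longrightarrow> p * q = inf p q"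
proof (rule order.antisym)
  assume p: "p \<le> 1" and q: "q \<le> 1"
  show "p * q \<le> inf p q"
    by (metis p q comp_left_isotone comp_right_isotone le_inf_iff mult_1_left mult_1_right)
  have "inf p q \<le> p * inf 1 (conv p * q)"
    using dedekind1[of p 1 q] by simp
  also have "\<dots> \<le> p * (p * q)"
    using coreflexive_symmetric[OF p] by (simp add: comp_right_isotone)
  also have "\<dots> \<le> p * q"
    by (metis p comp_left_isotone comp_right_isotone mult.assoc mult_1_right)
  finally show "inf p q \<le> p * q" .
qed

lemma coreflexive_idempotent: "p \<le> 1 \<Longrightarrow> p * p = p"
  by (simp add: coreflexive_comp_inf)

lemma coreflexive_comp_absorb_left:
  assumes "p \<le> 1" and "a \<le> p * x"
  shows "p * a = a"
proof (rule order.antisym)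
  show "p * a \<le> a"
    using comp_left_isotone[OF assms(1)] by simp
  have "a \<le> p * inf x (conv p * a)"
    using dedekind1[of p x a] assms(2) by (simp add: inf.absorb2)
  also have "\<dots> \<le> p * (p * a)"
    using coreflexive_symmetric[OF assms(1)] by (simp add: comp_right_isotone)
  finally show "a \<le> p * a"
    using coreflexive_idempotent[OF assms(1)] by (simp add: mult.assoc[symmetric])
qed

lemma coreflexive_comp_absorb_right:
  assumes "q \<le> 1" and "a \<le> x * q"
  shows "a * q = a"
proof (rule order.antisym)
  show "a * q \<le> a"
    using comp_right_isotone[OF assms(1)] by simp
  have "a \<le> inf x (a * conv q) * q"
    using dedekind_2[of x q a] assms(2) by (simp add: inf.absorb2)
  also have "\<dots> \<le> (a * q) * q"
    using coreflexive_symmetric[OF assms(1)] by (simp add: comp_left_isotone)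
  finally show "a \<le> a * q"
    using coreflexive_idempotent[OF assms(1)] by (simp add: mult.assoc)
qed

lemma disjoint_coreflexives_comp_left:
  assumes "p \<le> 1" and "p' \<le> 1" and "inf p p' = bot"
  shows "inf (p * x) (p' * y) = bot"
proof -
  have "inf (p * x) (p' * y) \<le> p * inf x (conv p * (p' * y))"
    by (rule dedekind1)
  also have "\<dots> = bot"
    using assms coreflexive_symmetric coreflexive_comp_inf
    by (simp add: mult.assoc[symmetric] comp_bot_left comp_bot_right)
  finally show ?thesis
    by (simp add: bot.extremum_unique)
qed

lemma disjoint_coreflexives_comp_right:
  assumes "q \<le> 1" and "q' \<le> 1" and "inf q q' = bot"
  shows "inf (x * q) (y * q') = bot"
proof -
  have "inf (x * q) (y * q') \<le> inf x (y * q' * conv q) * q"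
    by (rule dedekind_2)
  also have "\<dots> = bot"
    using assms coreflexive_symmetric coreflexive_comp_inf
    by (simp add: mult.assoc inf.commute comp_bot_left comp_bot_right)
  finally show ?thesis
    by (simp add: bot.extremum_unique)
qed

lemma simple_comp_top: "simple p \<Longrightarrow> simple q \<Longrightarrow> simple (p * top * q)"
  unfolding simple_def by (metis mult.assoc)

lemma rectangle_comp_top: "rectangle (p * top * q)"
proof -
  have "p * top * q * top * (p * top * q) = p * (top * q * top * p * top) * q"
    by (simp add: mult.assoc)
  also have "\<dots> \<le> p * top * q"
    by (intro comp_isotone order.refl top_greatest)
  finally show ?thesis
    unfolding rectangle_def by (simp add: mult.assoc)
qed

lemma coreflexive_rectangle_below_simple:
  assumes "P \<le> 1" and "rectangle P" and "p \<le> P" and "simple p"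
  shows "P \<le> p"
proof -
  have Pp: "P * p = p" and pP: "p * P = p"
    using assms(1,3) order_trans[OF assms(3,1)] coreflexive_comp_inf inf.absorb1 inf.absorb2
    by metis+
  have "P = P * P * P"
    using coreflexive_idempotent[OF assms(1)] by simp
  also have "\<dots> \<le> P * top * P"
    by (intro comp_isotone order.refl top_greatest)
  also have "\<dots> = (P * top * P) * p * top * P"
    using assms(4) Pp unfolding simple_def by (metis mult.assoc)
  also have "\<dots> \<le> P * p * top * P"
    using assms(2) unfolding rectangle_def by (intro comp_isotone order.refl)
  also have "\<dots> = p * (P * top * P)"
    using Pp pP by (metis mult.assoc)
  also have "\<dots> \<le> p * P"
    using assms(2) unfolding rectangle_def by (rule comp_right_isotone)
  finally show ?thesis
    using pP by simp
qed

lemma simple_below_rectangle_eq: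
  assumes "p \<le> 1" and "q \<le> 1" and "rectangle p" and "rectangle q"
    and "simple a" and "a \<le> p * top * q"
  shows "a = p * top * q"
proof (rule order.antisym[OF assms(6)])
  have pa: "p * a = a"
    using assms(1,6) coreflexive_comp_absorb_left by (simp add: mult.assoc)
  have aq: "a * q = a"
    using assms(2,6) coreflexive_comp_absorb_right by simp
  have "p * top * q = (p * top * p) * a * (q * top * q)"
    using assms(5) pa aq unfolding simple_def by (metis mult.assoc)
  also have "\<dots> \<le> p * a * q"
    using assms(3,4) unfolding rectangle_def by (intro comp_isotone order.refl)
  finally show "p * top * q \<le> a"
    using pa aq by simp
qed

lemma coreflexives_comp_below_inf:
  assumes "p \<le> 1" and "q \<le> 1"
  shows "p * x * q \<le> inf x (p * top * q)"
proof -
  have "p * x * q \<le> 1 * x * 1"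
    using assms by (intro comp_isotone order.refl)
  moreover have "p * x * q \<le> p * top * q"
    by (intro comp_isotone order.refl top_greatest)
  ultimately show ?thesis
    by simp
qed

lemma rectangles_comp_simple:
  assumes "r \<le> 1" and "simple r"
  shows "(p * top * r) * (r * top * q) = p * top * q"
  using assms coreflexive_idempotent unfolding simple_def by (metis mult.assoc)

lemma atom_nonzero: "atom a \<Longrightarrow> a \<noteq> bot"
  by (simp add: atom_def)

lemma atom_below_or_below_p: "atom a \<Longrightarrow> a \<le> x \<or> a \<le> - x"
  unfolding atom_def by (metis inf.cobounded1 inf.cobounded2 pseudo_complement)

lemma atom_not_below_both: "atom a \<Longrightarrow> a \<le> x \<Longrightarrow> \<not> a \<le> - x"
  by (metis atom_nonzero inf_p le_inf_iff bot.extremum_unique)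

lemma atom_eq_if_inf_nonzero: "atom a \<Longrightarrow> atom b \<Longrightarrow> inf a b \<noteq> bot \<Longrightarrow> a = b"
  unfolding atom_def by (metis inf.cobounded1 inf.cobounded2)

lemma atom_below_if_inf_nonzero: "atom a \<Longrightarrow> inf x a \<noteq> bot \<Longrightarrow> a \<le> x"
  unfolding atom_def by (metis inf.cobounded1 inf.cobounded2)

lemma atom_below_sup:
  assumes "atom a" and "a \<le> sup x y"
  shows "a \<le> x \<or> a \<le> y"
proof -
  have "sup (inf x a) (inf y a) = a"
    using assms(2) by (simp add: inf.absorb2 flip: inf_sup_distrib2)
  then have "inf x a \<noteq> bot \<or> inf y a \<noteq> bot"
    using atom_nonzero[OF assms(1)] by auto
  then show ?thesis
    using atom_below_if_inf_nonzero[OF assms(1)] by blast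
qed

definition is_representation :: "'b set \<Rightarrow> ('a \<Rightarrow> ('b \<times> 'b) set) \<Rightarrow> bool" where
  "is_representation A f \<longleftrightarrow> inj f \<and>
     (\<forall>x y. f (sup x y) = f x \<union> f y) \<and> (\<forall>x y. f (inf x y) = f x \<inter> f y) \<and>
     (\<forall>x. f (- x) = A \<times> A - f x) \<and> (\<forall>x y. f (x * y) = f x O f y) \<and>
     (\<forall>x. f (conv x) = (f x)\<inverse>) \<and> f bot = {} \<and> f top = A \<times> A \<and> f 1 = Id_on A"

lemma is_representation_image:
  assumes "is_representation A f" and "inj_on h A"
  shows "is_representation (h ` A) (\<lambda>x. map_prod h h ` f x)"
proof -
  let ?H = "map_prod h h"
  have f_inj: "inj f"
    and f_sup: "\<And>x y. f (sup x y) = f x \<union> f y"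
    and f_inf: "\<And>x y. f (inf x y) = f x \<inter> f y"
    and f_p: "\<And>x. f (- x) = A \<times> A - f x"
    and f_comp: "\<And>x y. f (x * y) = f x O f y"
    and f_conv: "\<And>x. f (conv x) = (f x)\<inverse>"
    and f_bot: "f bot = {}" and f_top: "f top = A \<times> A" and f_one: "f 1 = Id_on A"
    using assms(1) unfolding is_representation_def by simp_all
  have inj_H: "inj_on ?H (A \<times> A)"
    using assms(2) assms(2) by (rule map_prod_inj_on)
  have H_square: "?H ` (A \<times> A) = h ` A \<times> h ` A"
    by (rule map_prod_surj_on) simp_all
  have f_square: "f x \<subseteq> A \<times> A" for x
    using f_sup[of x top] f_top by (metis sup_top_right Un_upper1)
  have "inj (\<lambda>x. ?H ` f x)"
  proof (rule injI)
    fix x y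
    assume "?H ` f x = ?H ` f y"
    then have "f x = f y"
      by (simp add: inj_on_image_eq_iff[OF inj_H f_square f_square])
    then show "x = y"
      by (rule injD[OF f_inj])
  qed
  moreover have "?H ` f (- x) = h ` A \<times> h ` A - ?H ` f x" for x
    using inj_on_image_set_diff[OF inj_H Diff_subset f_square] by (simp add: f_p H_square)
  moreover have "?H ` f (x * y) = ?H ` f x O ?H ` f y" for x y
    by (simp add: f_comp map_prod_image_relcomp[OF assms(2) f_square f_square])
  moreover have "?H ` f (inf x y) = ?H ` f x \<inter> ?H ` f y" for x y
    by (simp add: f_inf inj_on_image_Int[OF inj_H f_square f_square])
  moreover have "?H ` f (conv x) = (?H ` f x)\<inverse>" for x
    by (intro subset_antisym subrelI) (auto simp: f_conv mem_map_prod_image)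
  moreover have "?H ` f 1 = Id_on (h ` A)"
    by (intro subset_antisym subrelI) (auto simp: f_one mem_map_prod_image Id_on_iff)
  ultimately show ?thesis
    unfolding is_representation_def by (simp add: f_sup f_bot f_top H_square image_Un)
qed

definition subidentity_atoms :: "'a set" where
  "subidentity_atoms = {p. atom p \<and> p \<le> 1}"

lemma finite_subidentity_atoms: "finite {a. atom a} \<Longrightarrow> finite subidentity_atoms"
  unfolding subidentity_atoms_def by (auto intro: finite_subset)

definition representation :: "'a \<Rightarrow> ('a \<times> 'a) set" where
  "representation x = {(p, q). p \<in> subidentity_atoms \<and> q \<in> subidentity_atoms \<and> p * top * q \<le> x}"

context
  assumes finite_atoms: "finite {a. atom a}"
    and atom_below: "\<And>x. x \<noteq> bot \<Longrightarrow> \<exists>a. atom a \<and> a \<le> x"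
begin

lemma disjoint_family_atoms_bij:
  assumes "finite J" and "card J = card {a. atom a}"
    and "\<And>j. j \<in> J \<Longrightarrow> F j \<noteq> bot"
    and "\<And>i j. i \<in> J \<Longrightarrow> j \<in> J \<Longrightarrow> i \<noteq> j \<Longrightarrow> inf (F i) (F j) = bot"
  obtains G where "bij_betw G J {a. atom a}"
    and "\<And>j a. j \<in> J \<Longrightarrow> atom a \<Longrightarrow> a \<le> F j \<longleftrightarrow> a = G j"
proof -
  define G where "G j = (SOME a. atom a \<and> a \<le> F j)" for j
  have G: "atom (G j) \<and> G j \<le> F j" if "j \<in> J" for j
    unfolding G_def using someI_ex[OF atom_below[OF assms(3)[OF that]]] .
  have index_unique: "i = j" if "i \<in> J" "j \<in> J" "atom a" "a \<le> F i" "a \<le> F j" for i j a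
    using assms(4)[OF that(1,2)] that(3-5) atom_nonzero by (metis le_inf_iff bot.extremum_unique)
  have "inj_on G J"
    by (rule inj_onI) (use G index_unique in metis)
  moreover have "G ` J \<subseteq> {a. atom a}"
    using G by auto
  ultimately have bij: "bij_betw G J {a. atom a}"
    unfolding bij_betw_def using card_subset_eq[OF finite_atoms] card_image assms(2) by metis
  have "a \<le> F j \<longleftrightarrow> a = G j" if j: "j \<in> J" and a: "atom a" for j a
  proof
    assume "a \<le> F j"
    moreover obtain i where "i \<in> J" "a = G i"
      using bij a unfolding bij_betw_def by blast
    ultimately show "a = G j"
      using G index_unique j a by metis
  qed (use G j in simp)
  with bij show thesis
    using that by blast
qed

context
  assumes atoms_regular: "\<And>a. atom a \<Longrightarrow> - (- a) = a"
begin

text \<open>Induction on the number of atoms below x: a regular atom a below x splits x as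
  sup a (inf x (- a)), and fewer atoms lie below inf x (- a).\<close>

lemma atom_join_induct:
  assumes "P bot" and "\<And>a y. atom a \<Longrightarrow> P y \<Longrightarrow> P (sup a y)"
  shows "P x"
proof (induction "card {a. atom a \<and> a \<le> x}" arbitrary: x rule: less_induct)
  case less
  show ?case
  proof (cases "x = bot")
    case True
    then show ?thesis
      using assms(1) by simp
  next
    case False
    then obtain a where a: "atom a" "a \<le> x"
      using atom_below by blast
    define y where "y = inf x (- a)"
    have "sup a y = inf x (sup a (- a))"
      unfolding y_def using a(2) by (simp add: sup_inf_distrib1 sup.absorb2)
    then have x: "x = sup a y"
      using stone[of a] atoms_regular[OF a(1)] by (simp add: sup.commute)
    have "{b. atom b \<and> b \<le> y} \<subset> {b. atom b \<and> b \<le> x}"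
      using a atom_not_below_both unfolding y_def by fastforce
    then have "card {b. atom b \<and> b \<le> y} < card {b. atom b \<and> b \<le> x}"
      by (rule psubset_card_mono[OF finite_subset[OF _ finite_atoms], rotated]) blast
    then have "P y"
      by (rule less)
    then show ?thesis
      using assms(2)[OF a(1)] x by simp
  qed
qed

lemma regular_if_atoms_regular: "- (- x) = x"
  by (induction x rule: atom_join_induct) (simp_all add: p_bot p_top regular_sup atoms_regular)

lemma below_if_atoms_below:
  assumes "\<And>a. atom a \<Longrightarrow> a \<le> x \<Longrightarrow> a \<le> y"
  shows "x \<le> y"
proof -
  have "inf x (- y) = bot"
    using assms atom_below atom_not_below_both by (meson le_inf_iff)
  then show ?thesis
    using pseudo_complement regular_if_atoms_regular by metis
qed

lemma atom_below_comp:
  "atom b \<Longrightarrow> b \<le> x * z * y \<Longrightarrow> \<exists>c. atom c \<and> c \<le> z \<and> b \<le> x * c * y"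
proof (induction z rule: atom_join_induct)
  case 1
  then show ?case
    using atom_nonzero by (simp add: comp_bot_left comp_bot_right bot.extremum_unique)
next
  case (2 a w)
  then have "b \<le> x * a * y \<or> b \<le> x * w * y"
    using atom_below_sup by (simp add: comp_sup_distr_left comp_sup_distr_right)
  then show ?case
    using 2 by (meson le_supI1 le_supI2 order.refl)
qed

end

context
  assumes atoms_simple: "\<And>a. atom a \<Longrightarrow> simple a"
    and atoms_count: "card {a. atom a} = card subidentity_atoms ^ 2"
begin

lemma atoms_comp_top_nonzero: "atom p \<Longrightarrow> atom q \<Longrightarrow> p * top * q \<noteq> bot"
  using simple_comp_top[OF atoms_simple atoms_simple] atom_nonzero
  unfolding simple_def by (metis comp_bot_left comp_bot_right bot.extremum_unique top_greatest)

lemma subidentity_rectangles_disjoint: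
  assumes "p \<in> subidentity_atoms" "q \<in> subidentity_atoms"
    and "p' \<in> subidentity_atoms" "q' \<in> subidentity_atoms"
    and "(p, q) \<noteq> (p', q')"
  shows "inf (p * top * q) (p' * top * q') = bot"
proof (cases "p = p'")
  case True
  then have "inf q q' = bot"
    using assms atom_eq_if_inf_nonzero unfolding subidentity_atoms_def by blast
  then show ?thesis
    using assms disjoint_coreflexives_comp_right unfolding subidentity_atoms_def by blast
next
  case False
  then have "inf p p' = bot"
    using assms atom_eq_if_inf_nonzero unfolding subidentity_atoms_def by blast
  then show ?thesis
    using assms disjoint_coreflexives_comp_left[of p p' "top * q" "top * q'"]
    unfolding subidentity_atoms_def by (simp add: mult.assoc)
qed

lemma subidentity_rectangles_atoms_bij:
  obtains G where "bij_betw G (subidentity_atoms \<times> subidentity_atoms) {a. atom a}"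
    and "\<And>p q a. p \<in> subidentity_atoms \<Longrightarrow> q \<in> subidentity_atoms \<Longrightarrow> atom a \<Longrightarrow>
           a \<le> p * top * q \<longleftrightarrow> a = G (p, q)"
proof (rule disjoint_family_atoms_bij[of _ "\<lambda>(p, q). p * top * q"])
  show "finite (subidentity_atoms \<times> subidentity_atoms)"
    using finite_subidentity_atoms[OF finite_atoms] by simp
  show "card (subidentity_atoms \<times> subidentity_atoms) = card {a. atom a}"
    \<comment> \<open>in this class context the unqualified power2_eq_square is fixed to the type 'a\<close>
    using atoms_count by (simp add: card_cartesian_product monoid_mult_class.power2_eq_square)
  show "(\<lambda>(p, q). p * top * q) j \<noteq> bot" if "j \<in> subidentity_atoms \<times> subidentity_atoms" for j
    using that atoms_comp_top_nonzero unfolding subidentity_atoms_def by auto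
  show "inf ((\<lambda>(p, q). p * top * q) i) ((\<lambda>(p, q). p * top * q) j) = bot"
    if "i \<in> subidentity_atoms \<times> subidentity_atoms" "j \<in> subidentity_atoms \<times> subidentity_atoms"
      and "i \<noteq> j" for i j
    using that subidentity_rectangles_disjoint by auto
qed (use that in auto)

lemma atom_below_subidentity_rectangle:
  assumes "atom a"
  shows "\<exists>p\<in>subidentity_atoms. \<exists>q\<in>subidentity_atoms. a \<le> p * top * q"
proof (rule subidentity_rectangles_atoms_bij)
  fix G
  assume G: "bij_betw G (subidentity_atoms \<times> subidentity_atoms) {a. atom a}"
    and below: "\<And>p q a. p \<in> subidentity_atoms \<Longrightarrow> q \<in> subidentity_atoms \<Longrightarrow> atom a \<Longrightarrow>
           a \<le> p * top * q \<longleftrightarrow> a = G (p, q)"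
  obtain pq where "pq \<in> subidentity_atoms \<times> subidentity_atoms" and "a = G pq"
    using G assms unfolding bij_betw_def by blast
  then show ?thesis
    using below assms by auto
qed

lemma subidentity_rectangle_atom_unique:
  "p \<in> subidentity_atoms \<Longrightarrow> q \<in> subidentity_atoms \<Longrightarrow> atom a \<Longrightarrow> atom b \<Longrightarrow>
    a \<le> p * top * q \<Longrightarrow> b \<le> p * top * q \<Longrightarrow> a = b"
  by (rule subidentity_rectangles_atoms_bij) auto

lemma subidentity_square_below_pp:
  assumes "p \<in> subidentity_atoms"
  shows "p * top * p \<le> - (- p)"
proof -
  have p: "atom p" "p \<le> 1"
    using assms unfolding subidentity_atoms_def by auto
  have "p \<le> p * top * p"
    using coreflexive_idempotent[OF p(2)] by (metis comp_isotone order.refl top_greatest)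
  then have "b = p" if "atom b" "b \<le> p * top * p" for b
    using subidentity_rectangle_atom_unique assms that p(1) by blast
  then have "inf (p * top * p) (- p) = bot"
    using atom_below atom_not_below_both p(1) by (metis order.refl le_inf_iff)
  then show ?thesis
    using pseudo_complement by blast
qed

lemma subidentity_atom_regular:
  assumes "p \<in> subidentity_atoms"
  shows "- (- p) = p"
proof (rule order.antisym[OF _ pp_increasing])
  have p: "atom p" "p \<le> 1"
    using assms unfolding subidentity_atoms_def by auto
  have "- (- p) \<le> 1"
    using p(2) pp_one by (metis p_antitone)
  moreover have "rectangle (- (- p))"
    unfolding rectangle_def using p_antitone[OF p_antitone[OF subidentity_square_below_pp[OF assms]]]
    by (simp add: pp_comp p_bot p_top ppp)
  ultimately show "- (- p) \<le> p"
    using coreflexive_rectangle_below_simple pp_increasing atoms_simple[OF p(1)] by blast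
qed

lemma subidentity_atom_rectangle: "p \<in> subidentity_atoms \<Longrightarrow> rectangle p"
  unfolding rectangle_def using subidentity_square_below_pp subidentity_atom_regular by fastforce

lemma subidentity_square: "p \<in> subidentity_atoms \<Longrightarrow> p * top * p = p"
  using subidentity_atom_rectangle coreflexive_idempotent
  unfolding rectangle_def subidentity_atoms_def
  by (metis order.antisym comp_isotone order.refl top_greatest mem_Collect_eq)

lemma subidentity_rectangle_atom:
  assumes "p \<in> subidentity_atoms" and "q \<in> subidentity_atoms"
  shows "atom (p * top * q)"
proof -
  obtain a where a: "atom a" "a \<le> p * top * q"
    using assms atoms_comp_top_nonzero atom_below unfolding subidentity_atoms_def by blast
  have "a = p * top * q"
    using simple_below_rectangle_eq subidentity_atom_rectangle atoms_simple assms a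
    unfolding subidentity_atoms_def by blast
  with a show ?thesis
    by simp
qed

lemma atom_eq_subidentity_rectangle:
  assumes "atom a"
  obtains p q where "p \<in> subidentity_atoms" and "q \<in> subidentity_atoms" and "a = p * top * q"
proof -
  obtain p q where pq: "p \<in> subidentity_atoms" "q \<in> subidentity_atoms" "a \<le> p * top * q"
    using atom_below_subidentity_rectangle assms by blast
  then have "a = p * top * q"
    using simple_below_rectangle_eq subidentity_atom_rectangle atoms_simple assms
    unfolding subidentity_atoms_def by blast
  with pq that show thesis
    by blast
qed

lemma atom_regular: "atom a \<Longrightarrow> - (- a) = a"
  by (erule atom_eq_subidentity_rectangle) (simp add: pp_comp p_bot p_top subidentity_atom_regular)

lemma all_regular: "- (- x) = x"
  by (rule regular_if_atoms_regular[OF atom_regular])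

lemma atom_rectangle: "atom a \<Longrightarrow> rectangle a"
  by (erule atom_eq_subidentity_rectangle) (simp add: rectangle_comp_top)

lemma subidentity_rectangle_below_comp:
  assumes p: "p \<in> subidentity_atoms" and q: "q \<in> subidentity_atoms"
    and "p * top * q \<le> x * y"
  shows "\<exists>r\<in>subidentity_atoms. p * top * r \<le> x \<and> r * top * q \<le> y"
proof -
  obtain r where r: "atom r" "r \<le> 1" "p * top * q \<le> x * r * y"
    using atom_below_comp[OF atom_regular subidentity_rectangle_atom[OF p q], of x 1 y] assms(3)
    by auto
  have "p * top * q = p * (p * top * q) * q"
    using p q coreflexive_comp_absorb_left[of p "p * top * q" "top * q"]
      coreflexive_comp_absorb_right[of q "p * top * q" "p * top"]
    unfolding subidentity_atoms_def by (simp add: mult.assoc)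
  also have "\<dots> \<le> p * (x * r * y) * q"
    using r(3) by (intro comp_left_isotone comp_right_isotone)
  also have "\<dots> = (p * x * r) * (r * y * q)"
    using coreflexive_idempotent[OF r(2)] by (metis mult.assoc)
  also have "\<dots> \<le> inf x (p * top * r) * inf y (r * top * q)"
    using p q r(2) coreflexives_comp_below_inf unfolding subidentity_atoms_def
    by (intro comp_isotone) auto
  finally have below: "p * top * q \<le> inf x (p * top * r) * inf y (r * top * q)" .
  have "p * top * q \<noteq> bot"
    using atoms_comp_top_nonzero p q unfolding subidentity_atoms_def by blast
  then have "inf x (p * top * r) \<noteq> bot" and "inf y (r * top * q) \<noteq> bot"
    using below by (metis comp_bot_left comp_bot_right bot.extremum_unique)+
  moreover have "r \<in> subidentity_atoms"
    using r unfolding subidentity_atoms_def by simp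
  ultimately have "p * top * r \<le> x" and "r * top * q \<le> y" and "r \<in> subidentity_atoms"
    by (simp_all add: atom_below_if_inf_nonzero subidentity_rectangle_atom p q)
  then show ?thesis
    by blast
qed

lemma representation_sup: "representation (sup x y) = representation x \<union> representation y"
proof -
  have "p * top * q \<le> sup x y \<longleftrightarrow> p * top * q \<le> x \<or> p * top * q \<le> y"
    if "p \<in> subidentity_atoms" and "q \<in> subidentity_atoms" for p q
    using atom_below_sup[OF subidentity_rectangle_atom[OF that]] by (auto intro: le_supI1 le_supI2)
  then show ?thesis
    unfolding representation_def by auto
qed

lemma representation_inf: "representation (inf x y) = representation x \<inter> representation y"
  unfolding representation_def by auto

lemma representation_p:
  "representation (- x) = subidentity_atoms \<times> subidentity_atoms - representation x"
  unfolding representation_def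
  using atom_below_or_below_p atom_not_below_both subidentity_rectangle_atom by blast

lemma representation_conv: "representation (conv x) = (representation x)\<inverse>"
proof -
  have "conv (p * top * q) = q * top * p" if "p \<in> subidentity_atoms" "q \<in> subidentity_atoms" for p q
    using that coreflexive_symmetric unfolding subidentity_atoms_def
    by (simp add: conv_comp conv_top mult.assoc)
  then show ?thesis
    unfolding representation_def by (auto simp flip: conv_le_iff)
qed

lemma representation_bot: "representation bot = {}"
  unfolding representation_def subidentity_atoms_def
  using atoms_comp_top_nonzero bot.extremum_unique by blast

lemma representation_top: "representation top = subidentity_atoms \<times> subidentity_atoms"
  unfolding representation_def by auto

lemma representation_one: "representation 1 = Id_on subidentity_atoms"
proof -
  have "p * top * q \<le> 1 \<longleftrightarrow> p = q"
    if p: "p \<in> subidentity_atoms" and q: "q \<in> subidentity_atoms" for p q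
  proof
    assume le: "p * top * q \<le> 1"
    have "conv (p * top * q) = q * top * p"
      using p q coreflexive_symmetric unfolding subidentity_atoms_def
      by (simp add: conv_comp conv_top mult.assoc)
    then have "inf (p * top * q) (q * top * p) \<noteq> bot"
      using coreflexive_symmetric[OF le] atoms_comp_top_nonzero p q
      unfolding subidentity_atoms_def by simp
    then show "p = q"
      using subidentity_rectangles_disjoint[OF p q q p] by auto
  next
    assume "p = q"
    then show "p * top * q \<le> 1"
      using subidentity_square p unfolding subidentity_atoms_def by simp
  qed
  then show ?thesis
    unfolding representation_def by (auto simp: Id_on_iff)
qed

lemma representation_comp: "representation (x * y) = representation x O representation y"
proof
  show "representation x O representation y \<subseteq> representation (x * y)"
  proof (clarify)
    fix p q r
    assume "(p, r) \<in> representation x" and "(r, q) \<in> representation y"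
    then have p: "p \<in> subidentity_atoms" and q: "q \<in> subidentity_atoms"
      and r: "atom r" "r \<le> 1" and "(p * top * r) * (r * top * q) \<le> x * y"
      unfolding representation_def subidentity_atoms_def by (auto intro: comp_isotone)
    then have "p * top * q \<le> x * y"
      using rectangles_comp_simple[OF r(2) atoms_simple[OF r(1)]] by simp
    with p q show "(p, q) \<in> representation (x * y)"
      unfolding representation_def by simp
  qed
next
  show "representation (x * y) \<subseteq> representation x O representation y"
  proof (clarify)
    fix p q
    assume "(p, q) \<in> representation (x * y)"
    then obtain r where "r \<in> subidentity_atoms" "p * top * r \<le> x" "r * top * q \<le> y"
      and "p \<in> subidentity_atoms" "q \<in> subidentity_atoms"
      unfolding representation_def using subidentity_rectangle_below_comp by blast
    then show "(p, q) \<in> representation x O representation y"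
      unfolding representation_def by blast
  qed
qed

lemma inj_representation: "inj representation"
proof (rule injI)
  have "x \<le> y" if "representation x = representation y" for x y
  proof (rule below_if_atoms_below[OF atom_regular])
    fix a
    assume "atom a" and "a \<le> x"
    obtain p q where pq: "p \<in> subidentity_atoms" "q \<in> subidentity_atoms" "a = p * top * q"
      using \<open>atom a\<close> by (rule atom_eq_subidentity_rectangle)
    with \<open>a \<le> x\<close> have "(p, q) \<in> representation x"
      unfolding representation_def by simp
    with pq that show "a \<le> y"
      unfolding representation_def by simp
  qed
  then show "representation x = representation y \<Longrightarrow> x = y" for x y
    by (metis order.antisym)
qed

lemma is_representation_representation: "is_representation subidentity_atoms representation"
  unfolding is_representation_def
  by (simp add: inj_representation representation_sup representation_inf representation_p
      representation_comp representation_conv representation_bot representation_top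
      representation_one)

end

end

end

lemma atom_below_if_count_atoms_nonzero:
  "count_atoms x \<noteq> 0 \<Longrightarrow> \<exists>a. atom a \<and> a \<le> x"
  unfolding count_atoms_def by (metis (mono_tags) card.empty empty_Collect_eq)

lemma representable_iff:
  "representable TYPE('a::stone_relation_algebra) \<longleftrightarrow>
    relation_algebra TYPE('a) \<and> (\<exists>(A::nat set) (f::'a \<Rightarrow> (nat \<times> nat) set). is_representation A f)"
  unfolding representable_def is_representation_def by (rule refl)

lemma representable_if_finite_representation:
  fixes f :: "'a::stone_relation_algebra \<Rightarrow> ('b \<times> 'b) set"
  assumes "relation_algebra TYPE('a)" and "is_representation B f" and "finite B"
  shows "representable TYPE('a)"
proof -
  obtain h :: "'b \<Rightarrow> nat" where "inj_on h B"
    using finite_imp_inj_to_nat_seg[OF assms(3)] by blast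
  then have "is_representation (h ` B) (\<lambda>x. map_prod h h ` f x)"
    using assms(2) by (rule is_representation_image[rotated])
  with assms(1) show ?thesis
    unfolding representable_iff by blast
qed

theorem mainTheorem7:
  fixes C :: "'a::stone_relation_algebra \<Rightarrow> nat"
  assumes "atom_simple TYPE('a)"
    and "finite {a::'a. atom a}"
    and "C = count_atoms"
    and "\<forall>x::'a. C x = 0 \<longleftrightarrow> x = bot"
    and "C top = (C 1)^2"
  shows "atomic TYPE('a) \<and> atom_rectangular TYPE('a) \<and> representable TYPE('a)"
proof -
  have atom_below: "\<exists>a. atom a \<and> a \<le> x" if "x \<noteq> bot" for x :: 'a
    using assms(3,4) that atom_below_if_count_atoms_nonzero by blast
  have count: "card {a::'a. atom a} = card (subidentity_atoms :: 'a set) ^ 2"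
    using assms(3,5) unfolding count_atoms_def subidentity_atoms_def by simp
  note hypotheses = assms(2) atom_below assms(1)[unfolded atom_simple_def, rule_format] count
  have "relation_algebra TYPE('a)"
    unfolding relation_algebra_def using all_regular[OF hypotheses] by blast
  then have "representable TYPE('a)"
    using representable_if_finite_representation is_representation_representation[OF hypotheses]
      finite_subidentity_atoms[OF assms(2)]
    by blast
  moreover have "atom_rectangular TYPE('a)"
    unfolding atom_rectangular_def using atom_rectangle[OF hypotheses] by blast
  moreover have "atomic TYPE('a)"
    unfolding atomic_def using atom_below by blast
  ultimately show ?thesis
    by blast
qed

end
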